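(* Let $n\ge2$, $C>0$, $x\in\mathcal{K}_S$, and $\tilde{x}=x+\eta$ with $\eta\sim\mathcal{N}(0,\sigma^2I_n)$, $\sigma>0$. Let $f$ denote the probability density of $\pi_S(\tilde{x})$ with respect to the $(n-1)$-dimensional Lebesgue measure on the hyperplane $\mathcal{K}_S$. Then for every pair $(i,j)$ and every $y\in\mathcal{K}_S$ with $x_i\le x_j$ and $y_i\le y_j$, $$f(y)\ge f(\mathrm{sw}_{ij}(y)).$$
   Context: $\mathcal{K}_S=\{v\in\mathbb{R}^n:\sum_iv_i=C\}$ and $\pi_S$ is the Euclidean projection onto $\mathcal{K}_S$. $\mathrm{sw}_{ij}(y)$ is the vector obtained from $y$ by swapping its $i$-th and $j$-th entries. *)

theory Defs
  imports "HOL-Probability.Probability"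
begin

text \<open>Points of R^n are represented as extensional functions on the index set {..<n}
  (the carrier of the product measure PiM {..<n} (\<lambda>_. lborel)).\<close>

definition K_S :: "nat \<Rightarrow> real \<Rightarrow> (nat \<Rightarrow> real) set" where
  "K_S n C = {v \<in> PiE {..<n} (\<lambda>_. UNIV). (\<Sum>i<n. v i) = C}"

definition eucl_proj :: "nat \<Rightarrow> (nat \<Rightarrow> real) set \<Rightarrow> (nat \<Rightarrow> real) \<Rightarrow> (nat \<Rightarrow> real)" where
  "eucl_proj n K z = (THE p. p \<in> K \<and>
      (\<forall>q\<in>K. (\<Sum>i<n. (z i - p i)^2) \<le> (\<Sum>i<n. (z i - q i)^2)))"

definition pi_S :: "nat \<Rightarrow> real \<Rightarrow> (nat \<Rightarrow> real) \<Rightarrow> (nat \<Rightarrow> real)" where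
  "pi_S n C = eucl_proj n (K_S n C)"

definition sw :: "nat \<Rightarrow> nat \<Rightarrow> (nat \<Rightarrow> real) \<Rightarrow> (nat \<Rightarrow> real)" where
  "sw i j y = (\<lambda>k. if k = i then y j else if k = j then y i else y k)"

definition gauss_iso :: "nat \<Rightarrow> real \<Rightarrow> (nat \<Rightarrow> real) measure" where
  "gauss_iso n \<sigma> = PiM {..<n} (\<lambda>_. density lborel (normal_density 0 \<sigma>))"

definition hyp_param :: "nat \<Rightarrow> real \<Rightarrow> (nat \<Rightarrow> real) \<Rightarrow> (nat \<Rightarrow> real)" where
  "hyp_param n C u = (\<lambda>i. if i < n - 1 then u i
                           else if i = n - 1 then C - (\<Sum>k<n-1. u k) else undefined)"

text \<open>(n-1)-dimensional Lebesgue (surface) measure on the hyperplane K_S, as a measure on R^n: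
  image of Lebesgue measure on R^(n-1) under the coordinate parametrisation, times
  its area factor sqrt n (the Gram determinant of the parametrisation is n).\<close>
definition hyp_measure :: "nat \<Rightarrow> real \<Rightarrow> (nat \<Rightarrow> real) measure" where
  "hyp_measure n C = distr (density (PiM {..<n-1} (\<lambda>_. lborel)) (\<lambda>_. ennreal (sqrt (real n))))
                           (PiM {..<n} (\<lambda>_. lborel)) (hyp_param n C)"

end

theory Submission
  imports Defs
begin

text \<open>
  Identify the hyperplane with R^(n-1) through its first n-1 coordinates. The projection of
  x + \<eta> is x + \<eta> - mean(\<eta>) (1,...,1); integrating out the component of \<eta> along (1,...,1)
  shows that its law has density c exp(-|y - x|^2 / (2 \<sigma>^2)) with respect to the surface measure:
  an isotropic Gaussian on the hyperplane centred at x. A continuous density agrees with this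
  expression everywhere on the hyperplane, so f(y) \<ge> f(sw i j y) reduces to
  |y - x|^2 \<le> |sw i j y - x|^2, the rearrangement inequality for the two swapped entries.
\<close>

section \<open>Projection onto the hyperplane\<close>

lemma eucl_proj_eqI:
  assumes K: "K \<subseteq> PiE {..<n} (\<lambda>_. UNIV)" and p: "p \<in> K"
    and pythagoras: "\<And>q. q \<in> K \<Longrightarrow>
      (\<Sum>i<n. (z i - q i)^2) = (\<Sum>i<n. (z i - p i)^2) + (\<Sum>i<n. (p i - q i)^2)"
  shows "eucl_proj n K z = p"
  unfolding eucl_proj_def
proof (rule the_equality)
  show "p \<in> K \<and> (\<forall>q\<in>K. (\<Sum>i<n. (z i - p i)^2) \<le> (\<Sum>i<n. (z i - q i)^2))"
  proof (intro conjI ballI)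
    fix q assume "q \<in> K"
    from pythagoras[OF this] show "(\<Sum>i<n. (z i - p i)^2) \<le> (\<Sum>i<n. (z i - q i)^2)"
      by (simp add: sum_nonneg)
  qed (fact p)
next
  fix p' assume p': "p' \<in> K \<and> (\<forall>q\<in>K. (\<Sum>i<n. (z i - p' i)^2) \<le> (\<Sum>i<n. (z i - q i)^2))"
  then have "(\<Sum>i<n. (z i - p' i)^2) \<le> (\<Sum>i<n. (z i - p i)^2)"
    using p by blast
  then have "(\<Sum>i<n. (p i - p' i)^2) = 0"
    using pythagoras[of p'] p' sum_nonneg[of "{..<n}" "\<lambda>i. (p i - p' i)^2"] by simp
  then have "p' i = p i" if "i < n" for i
    using that by (subst (asm) sum_nonneg_eq_0_iff) auto
  moreover have "p' \<in> PiE {..<n} (\<lambda>_. UNIV)" "p \<in> PiE {..<n} (\<lambda>_. UNIV)"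
    using K p p' by auto
  ultimately show "p' = p"
    by (metis PiE_ext lessThan_iff)
qed

lemma mean_shift_in_K_S:
  assumes "n > 0"
  shows "(\<lambda>k\<in>{..<n}. z k - ((\<Sum>l<n. z l) - C) / n) \<in> K_S n C"
proof -
  have "(\<Sum>k<n. z k - ((\<Sum>l<n. z l) - C) / n) = (\<Sum>k<n. z k) - n * (((\<Sum>l<n. z l) - C) / n)"
    by (simp only: sum_subtractf sum_constant card_lessThan)
  also have "\<dots> = C"
    using assms by simp
  finally show ?thesis by (simp add: K_S_def)
qed

lemma pi_S_eq:
  assumes n: "n > 0"
  shows "pi_S n C z = (\<lambda>k\<in>{..<n}. z k - ((\<Sum>l<n. z l) - C) / n)"
proof -
  define t where "t = ((\<Sum>l<n. z l) - C) / n"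
  define p where "p = (\<lambda>k\<in>{..<n}. z k - t)"
  have p: "p \<in> K_S n C"
    unfolding p_def t_def using n by (rule mean_shift_in_K_S)
  have "eucl_proj n (K_S n C) z = p"
  proof (rule eucl_proj_eqI)
    show "K_S n C \<subseteq> PiE {..<n} (\<lambda>_. UNIV)" by (auto simp: K_S_def)
    fix q assume q: "q \<in> K_S n C"
    have "(\<Sum>i<n. (z i - q i)^2) = (\<Sum>i<n. (z i - p i)^2 + (p i - q i)^2 + 2 * t * (p i - q i))"
      by (rule sum.cong) (auto simp: p_def power2_eq_square algebra_simps)
    also have "\<dots> = (\<Sum>i<n. (z i - p i)^2) + (\<Sum>i<n. (p i - q i)^2) + 2 * t * ((\<Sum>i<n. p i) - (\<Sum>i<n. q i))"
      by (simp add: sum.distrib sum_subtractf flip: sum_distrib_left)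
    \<comment> \<open>z - p is the constant vector t, which is orthogonal to the difference p - q of two points of the hyperplane\<close>
    also have "(\<Sum>i<n. p i) - (\<Sum>i<n. q i) = 0"
      using p q by (simp add: K_S_def)
    finally show "(\<Sum>i<n. (z i - q i)^2) = (\<Sum>i<n. (z i - p i)^2) + (\<Sum>i<n. (p i - q i)^2)"
      by simp
  qed (fact p)
  then show ?thesis
    by (simp add: pi_S_def p_def t_def)
qed

lemma hyp_param_Suc:
  "hyp_param (Suc m) C u = (\<lambda>i\<in>{..<Suc m}. if i < m then u i else C - (\<Sum>k<m. u k))"
  unfolding hyp_param_def by (auto simp: fun_eq_iff)

lemma hyp_param_in_K_S: "hyp_param (Suc m) C u \<in> K_S (Suc m) C"
proof -
  have "(\<Sum>k<m. hyp_param (Suc m) C u k) = (\<Sum>k<m. u k)"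
    by (intro sum.cong) (auto simp: hyp_param_def)
  then show ?thesis
    by (simp add: K_S_def hyp_param_Suc)
qed

lemma restrict_hyp_param: "u \<in> PiE {..<m} (\<lambda>_. UNIV) \<Longrightarrow> restrict (hyp_param (Suc m) C u) {..<m} = u"
  unfolding hyp_param_Suc by (auto simp: fun_eq_iff PiE_def extensional_def)

lemma hyp_param_restrict:
  assumes y: "y \<in> K_S (Suc m) C"
  shows "hyp_param (Suc m) C (restrict y {..<m}) = y"
proof -
  have "(\<Sum>k<m. y k) + y m = C" using y by (simp add: K_S_def)
  moreover have "y \<in> extensional {..<Suc m}" using y by (simp add: K_S_def PiE_def)
  ultimately show ?thesis
    unfolding hyp_param_Suc by (auto simp: fun_eq_iff extensional_def less_Suc_eq)
qed

lemma measurable_hyp_param[measurable]: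
  "hyp_param (Suc m) C \<in> measurable (PiM {..<m} (\<lambda>_. lborel)) (PiM {..<Suc m} (\<lambda>_. lborel::real measure))"
  unfolding hyp_param_Suc
proof (rule measurable_restrict)
  show "(\<lambda>u. if i < m then u i else C - (\<Sum>k<m. u k)) \<in> measurable (PiM {..<m} (\<lambda>_. lborel)) lborel"
    if "i \<in> {..<Suc m}" for i by (cases "i < m") simp_all
qed

lemma continuous_on_coordinate: "continuous_on S (\<lambda>u::nat\<Rightarrow>real. u k)"
  by (rule continuous_on_subset[OF continuous_on_product_coordinates]) auto

lemma continuous_on_hyp_param: "continuous_on S (hyp_param (Suc m) C)"
proof (rule continuous_on_coordinatewise_then_product)
  show "continuous_on S (\<lambda>u. hyp_param (Suc m) C u i)" for i
    unfolding hyp_param_def by (cases "i < m"; cases "i = m") (simp_all add: continuous_on_coordinate continuous_on_diff continuous_on_sum)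
qed

lemma pi_S_translate:
  assumes x: "x \<in> K_S (Suc m) C"
  shows "pi_S (Suc m) C (\<lambda>k\<in>{..<Suc m}. x k + \<eta> k)
       = hyp_param (Suc m) C (\<lambda>k\<in>{..<m}. x k + \<eta> k - (\<Sum>l<Suc m. \<eta> l) / Suc m)"
proof -
  let ?z = "\<lambda>k\<in>{..<Suc m}. x k + \<eta> k"
  let ?p = "pi_S (Suc m) C ?z"
  have "(\<Sum>l<Suc m. ?z l) = C + (\<Sum>l<Suc m. \<eta> l)"
    using x by (simp add: K_S_def sum.distrib del: sum.lessThan_Suc)
  then have "restrict ?p {..<m} = (\<lambda>k\<in>{..<m}. x k + \<eta> k - (\<Sum>l<Suc m. \<eta> l) / Suc m)"
    by (simp add: pi_S_eq fun_eq_iff del: sum.lessThan_Suc)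
  moreover have "?p \<in> K_S (Suc m) C"
    unfolding pi_S_eq[OF zero_less_Suc] by (rule mean_shift_in_K_S) simp
  ultimately show ?thesis
    using hyp_param_restrict by metis
qed

section \<open>Finite products of Lebesgue measure\<close>

interpretation lborel_product: product_sigma_finite "\<lambda>_. lborel :: real measure"
  by standard

lemma nn_integral_PiM_lborel_translate:
  assumes "finite I" and "f \<in> borel_measurable (PiM I (\<lambda>_. lborel::real measure))"
  shows "(\<integral>\<^sup>+x. f (\<lambda>i\<in>I. x i + c i) \<partial>PiM I (\<lambda>_. lborel)) = (\<integral>\<^sup>+x. f x \<partial>PiM I (\<lambda>_. lborel))"
  using assms
proof (induction I arbitrary: f rule: finite_induct)
  case empty
  show ?case
    by (intro nn_integral_cong) (auto simp: space_PiM)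
next
  case (insert i I)
  note [measurable] = insert.prems
  define G where "G x = (\<integral>\<^sup>+y. f (x(i := y)) \<partial>lborel)" for x
  have [measurable]: "G \<in> borel_measurable (PiM I (\<lambda>_. lborel))"
    unfolding G_def by measurable
  have "(\<integral>\<^sup>+x. f (\<lambda>j\<in>insert i I. x j + c j) \<partial>PiM (insert i I) (\<lambda>_. lborel))
      = (\<integral>\<^sup>+x. (\<integral>\<^sup>+y. f (\<lambda>j\<in>insert i I. (x(i:=y)) j + c j) \<partial>lborel) \<partial>PiM I (\<lambda>_. lborel))"
    by (rule lborel_product.product_nn_integral_insert[OF insert.hyps]) measurable
  also have "\<dots> = (\<integral>\<^sup>+x. G (\<lambda>j\<in>I. x j + c j) \<partial>PiM I (\<lambda>_. lborel))"
  proof (rule nn_integral_cong)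
    fix x assume x: "x \<in> space (PiM I (\<lambda>_. lborel::real measure))"
    have shift: "(\<lambda>j\<in>insert i I. (x(i:=y)) j + c j) = (\<lambda>j\<in>I. x j + c j)(i := c i + 1 * y)" for y
      using insert.hyps by (auto simp: fun_eq_iff)
    have "(\<lambda>y. f ((\<lambda>j\<in>I. x j + c j)(i := y))) \<in> borel_measurable borel"
      using x insert.hyps by measurable
    from nn_integral_real_affine[OF this, of 1 "c i"]
    show "(\<integral>\<^sup>+y. f (\<lambda>j\<in>insert i I. (x(i:=y)) j + c j) \<partial>lborel) = G (\<lambda>j\<in>I. x j + c j)"
      unfolding G_def shift by simp
  qed
  also have "\<dots> = (\<integral>\<^sup>+x. G x \<partial>PiM I (\<lambda>_. lborel))"
    by (rule insert.IH) measurable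
  also have "\<dots> = (\<integral>\<^sup>+x. f x \<partial>PiM (insert i I) (\<lambda>_. lborel))"
    unfolding G_def by (rule lborel_product.product_nn_integral_insert[symmetric]) (use insert.hyps in auto)
  finally show ?case .
qed

lemma nn_integral_PiM_lborel_shear:
  assumes I: "finite I"
    and [measurable]: "(\<lambda>(\<eta>, s). G \<eta> s) \<in> borel_measurable (PiM I (\<lambda>_. lborel) \<Otimes>\<^sub>M (lborel::real measure))"
  shows "(\<integral>\<^sup>+\<eta>. (\<integral>\<^sup>+s. G \<eta> s \<partial>lborel) \<partial>PiM I (\<lambda>_. lborel))
       = (\<integral>\<^sup>+v. (\<integral>\<^sup>+s. G (\<lambda>i\<in>I. v i + (s + c i)) s \<partial>lborel) \<partial>PiM I (\<lambda>_. lborel))"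
proof -
  interpret PL: finite_product_sigma_finite "\<lambda>_. lborel::real measure" I
    by standard (rule I)
  interpret P: pair_sigma_finite "PiM I (\<lambda>_. lborel::real measure)" "lborel :: real measure"
    by (intro pair_sigma_finite.intro PL.sigma_finite_measure_axioms lborel.sigma_finite_measure_axioms)
  have "(\<integral>\<^sup>+\<eta>. (\<integral>\<^sup>+s. G \<eta> s \<partial>lborel) \<partial>PiM I (\<lambda>_. lborel))
      = (\<integral>\<^sup>+s. (\<integral>\<^sup>+\<eta>. G \<eta> s \<partial>PiM I (\<lambda>_. lborel)) \<partial>lborel)"
    by (rule P.Fubini'[symmetric]) measurable
  also have "\<dots> = (\<integral>\<^sup>+s. (\<integral>\<^sup>+v. G (\<lambda>i\<in>I. v i + (s + c i)) s \<partial>PiM I (\<lambda>_. lborel)) \<partial>lborel)"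
    by (intro nn_integral_cong nn_integral_PiM_lborel_translate[symmetric] I) measurable
  also have "\<dots> = (\<integral>\<^sup>+v. (\<integral>\<^sup>+s. G (\<lambda>i\<in>I. v i + (s + c i)) s \<partial>lborel) \<partial>PiM I (\<lambda>_. lborel))"
    by (rule P.Fubini') measurable
  finally show ?thesis .
qed

lemma PiM_density_lborel:
  assumes "finite I" and [measurable]: "d \<in> borel_measurable (lborel :: real measure)"
    and sf: "sigma_finite_measure (density lborel d)"
  shows "PiM I (\<lambda>_. density lborel d) = density (PiM I (\<lambda>_. lborel)) (\<lambda>x. \<Prod>i\<in>I. d (x i))"
proof -
  interpret D: product_sigma_finite "\<lambda>_. density lborel d"
    unfolding product_sigma_finite_def using sf by simp
  show ?thesis
  proof (rule D.PiM_eqI[symmetric])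
    show "sets (density (PiM I (\<lambda>_. lborel)) (\<lambda>x. \<Prod>i\<in>I. d (x i))) = sets (PiM I (\<lambda>_. density lborel d))"
      by (auto intro!: sets_PiM_cong)
  next
    fix A assume "\<And>i. i \<in> I \<Longrightarrow> A i \<in> sets (density lborel d)"
    then have A: "\<And>i. i \<in> I \<Longrightarrow> A i \<in> sets lborel" by simp
    have "emeasure (density (PiM I (\<lambda>_. lborel)) (\<lambda>x. \<Prod>i\<in>I. d (x i))) (PiE I A)
        = (\<integral>\<^sup>+x. (\<Prod>i\<in>I. d (x i)) * indicator (PiE I A) x \<partial>PiM I (\<lambda>_. lborel))"
      using A by (subst emeasure_density) (auto intro!: sets_PiM_I_finite \<open>finite I\<close>)
    also have "\<dots> = (\<integral>\<^sup>+x. (\<Prod>i\<in>I. d (x i) * indicator (A i) (x i)) \<partial>PiM I (\<lambda>_. lborel))"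
      using \<open>finite I\<close> by (intro nn_integral_cong)
        (auto simp: space_PiM indicator_def prod.distrib PiE_iff intro: prod_zero)
    also have "\<dots> = (\<Prod>i\<in>I. \<integral>\<^sup>+y. d y * indicator (A i) y \<partial>lborel)"
      using A by (intro lborel_product.product_nn_integral_prod \<open>finite I\<close>) auto
    also have "\<dots> = (\<Prod>i\<in>I. emeasure (density lborel d) (A i))"
      using A by (intro prod.cong) (auto simp: emeasure_density)
    finally show "emeasure (density (PiM I (\<lambda>_. lborel)) (\<lambda>x. \<Prod>i\<in>I. d (x i))) (PiE I A)
        = (\<Prod>i\<in>I. emeasure (density lborel d) (A i))" .
  qed (fact \<open>finite I\<close>)
qed

section \<open>The law of the projected Gaussian\<close>

lemma gauss_iso_eq_density:
  assumes "\<sigma> > 0"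
  shows "gauss_iso n \<sigma>
       = density (PiM {..<n} (\<lambda>_. lborel)) (\<lambda>\<eta>. \<Prod>i<n. ennreal (normal_density 0 \<sigma> (\<eta> i)))"
  unfolding gauss_iso_def
proof (rule PiM_density_lborel)
  show "sigma_finite_measure (density lborel (\<lambda>x. ennreal (normal_density 0 \<sigma> x)))"
    using prob_space_normal_density[OF assms] by (rule prob_space_imp_sigma_finite)
qed simp_all

lemma measurable_gauss_iso_centered:
  "(\<lambda>\<eta>. \<lambda>k\<in>{..<m}. x k + \<eta> k - (\<Sum>l<Suc m. \<eta> l) / Suc m)
     \<in> measurable (gauss_iso (Suc m) \<sigma>) (PiM {..<m} (\<lambda>_. lborel))"
proof -
  have "sets (gauss_iso (Suc m) \<sigma>) = sets (PiM {..<Suc m} (\<lambda>_. lborel))"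
    unfolding gauss_iso_def by (rule sets_PiM_cong) auto
  then show ?thesis
    by (subst measurable_cong_sets[OF _ refl]) measurable
qed

lemma nn_integral_lborel_mean_substitution:
  fixes n S :: real and d :: "real \<Rightarrow> real" and g :: "real \<Rightarrow> ennreal"
  assumes n: "n > 0" and d: "\<And>w. d w \<ge> 0"
    and [measurable]: "d \<in> borel_measurable borel" "g \<in> borel_measurable borel"
  shows "(\<integral>\<^sup>+w. ennreal (d w) * g ((S + w) / n) \<partial>lborel) = (\<integral>\<^sup>+s. ennreal (n * d (n * s - S)) * g s \<partial>lborel)"
proof -
  have "(\<integral>\<^sup>+w. ennreal (d w) * g ((S + w) / n) \<partial>lborel)
      = ennreal n * (\<integral>\<^sup>+s. ennreal (d (- S + n * s)) * g ((S + (- S + n * s)) / n) \<partial>lborel)"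
    using nn_integral_real_affine[of "\<lambda>w. ennreal (d w) * g ((S + w) / n)" n "- S"] n
    by (simp add: abs_of_pos)
  also have "\<dots> = (\<integral>\<^sup>+s. ennreal (n * d (n * s - S)) * g s \<partial>lborel)"
    using n d by (subst nn_integral_cmult[symmetric], measurable)
      (auto intro!: nn_integral_cong simp: ennreal_mult mult.assoc)
  finally show ?thesis .
qed

lemma nn_integral_gauss_iso_centered:
  fixes F :: "(nat \<Rightarrow> real) \<Rightarrow> ennreal" and x :: "nat \<Rightarrow> real"
  assumes \<sigma>: "\<sigma> > 0" and [measurable]: "F \<in> borel_measurable (PiM {..<m} (\<lambda>_. lborel))"
  defines "\<phi> \<equiv> normal_density 0 \<sigma>" and "n \<equiv> real (Suc m)"
  shows "(\<integral>\<^sup>+\<eta>. F (\<lambda>k\<in>{..<m}. x k + \<eta> k - (\<Sum>l<Suc m. \<eta> l) / n) \<partial>gauss_iso (Suc m) \<sigma>)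
       = (\<integral>\<^sup>+\<eta>. (\<integral>\<^sup>+s. ennreal (n * (\<Prod>i<m. \<phi> (\<eta> i)) * \<phi> (n * s - (\<Sum>l<m. \<eta> l)))
            * F (\<lambda>k\<in>{..<m}. x k + \<eta> k - s) \<partial>lborel) \<partial>PiM {..<m} (\<lambda>_. lborel))"
proof -
  have [measurable]: "\<phi> \<in> borel_measurable borel" and \<phi>_nonneg: "\<And>t. \<phi> t \<ge> 0"
    by (simp_all add: \<phi>_def)
  let ?F = "\<lambda>\<eta>. F (\<lambda>k\<in>{..<m}. x k + \<eta> k - (\<Sum>l<Suc m. \<eta> l) / n)"
  have "(\<integral>\<^sup>+\<eta>. ?F \<eta> \<partial>gauss_iso (Suc m) \<sigma>)
      = (\<integral>\<^sup>+\<eta>. (\<Prod>i\<in>insert m {..<m}. ennreal (\<phi> (\<eta> i))) * ?F \<eta> \<partial>PiM (insert m {..<m}) (\<lambda>_. lborel))"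
    unfolding gauss_iso_eq_density[OF \<sigma>] \<phi>_def lessThan_Suc by (rule nn_integral_density) measurable
  also have "\<dots> = (\<integral>\<^sup>+\<eta>. (\<integral>\<^sup>+w. (\<Prod>i\<in>insert m {..<m}. ennreal (\<phi> ((\<eta>(m := w)) i))) * ?F (\<eta>(m := w))
                     \<partial>lborel) \<partial>PiM {..<m} (\<lambda>_. lborel))"
    by (rule lborel_product.product_nn_integral_insert) (auto simp: n_def)
  also have "\<dots> = (\<integral>\<^sup>+\<eta>. (\<integral>\<^sup>+w. ennreal ((\<Prod>i<m. \<phi> (\<eta> i)) * \<phi> w)
                     * F (\<lambda>k\<in>{..<m}. x k + \<eta> k - ((\<Sum>l<m. \<eta> l) + w) / n) \<partial>lborel) \<partial>PiM {..<m} (\<lambda>_. lborel))"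
    by (intro nn_integral_cong arg_cong2[where f = "(*)"])
      (auto simp: prod_ennreal \<phi>_nonneg ennreal_mult prod_nonneg mult.commute
        intro!: arg_cong[where f = F] restrict_ext)
  also have "\<dots> = (\<integral>\<^sup>+\<eta>. (\<integral>\<^sup>+s. ennreal (n * (\<Prod>i<m. \<phi> (\<eta> i)) * \<phi> (n * s - (\<Sum>l<m. \<eta> l)))
                     * F (\<lambda>k\<in>{..<m}. x k + \<eta> k - s) \<partial>lborel) \<partial>PiM {..<m} (\<lambda>_. lborel))"
  proof (rule nn_integral_cong)
    fix \<eta> :: "nat \<Rightarrow> real"
    show "(\<integral>\<^sup>+w. ennreal ((\<Prod>i<m. \<phi> (\<eta> i)) * \<phi> w)
            * F (\<lambda>k\<in>{..<m}. x k + \<eta> k - ((\<Sum>l<m. \<eta> l) + w) / n) \<partial>lborel)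
        = (\<integral>\<^sup>+s. ennreal (n * (\<Prod>i<m. \<phi> (\<eta> i)) * \<phi> (n * s - (\<Sum>l<m. \<eta> l)))
            * F (\<lambda>k\<in>{..<m}. x k + \<eta> k - s) \<partial>lborel)"
      using nn_integral_lborel_mean_substitution[where g = "\<lambda>s. F (\<lambda>k\<in>{..<m}. x k + \<eta> k - s)"
          and d = "\<lambda>w. (\<Prod>i<m. \<phi> (\<eta> i)) * \<phi> w" and n = n and S = "\<Sum>l<m. \<eta> l"]
      by (simp add: n_def \<phi>_nonneg prod_nonneg mult.assoc)
  qed
  finally show ?thesis .
qed

lemma nn_integral_normal_density_fiber:
  fixes \<sigma> :: real and m :: nat
  assumes \<sigma>: "\<sigma> > 0"
  defines "\<phi> \<equiv> normal_density 0 \<sigma>" and "n \<equiv> real (Suc m)"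
  obtains K where "K > 0" and "\<And>a. (\<integral>\<^sup>+s. ennreal (n * (\<Prod>k<m. \<phi> (a k + s)) * \<phi> (n * s - (\<Sum>k<m. a k + s))) \<partial>lborel)
      = ennreal (K * exp (- ((\<Sum>k<m. (a k)\<^sup>2) + (\<Sum>k<m. a k)\<^sup>2) / (2 * \<sigma>\<^sup>2)))"
proof
  define c where "c = 1 / sqrt (2 * pi * \<sigma>\<^sup>2)"
  define \<tau> where "\<tau> = \<sigma> / sqrt n"
  have n: "n > 0" unfolding n_def by simp
  have \<tau>: "\<tau> > 0" "\<tau>\<^sup>2 = \<sigma>\<^sup>2 / n"
    unfolding \<tau>_def using n \<sigma> by (simp_all add: power_divide)
  show "n * c ^ Suc m * sqrt (2 * pi * \<tau>\<^sup>2) > 0"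
    unfolding c_def using n \<tau> \<sigma> by simp
  fix a :: "nat \<Rightarrow> real"
  define D where "D = (\<Sum>k<m. (a k)\<^sup>2) + (\<Sum>k<m. a k)\<^sup>2"
  have \<phi>: "\<phi> z = c * exp (- z\<^sup>2 / (2 * \<sigma>\<^sup>2))" for z
    unfolding \<phi>_def normal_density_def c_def by simp
  \<comment> \<open>the point (a + s, n s - \<Sum>(a + s)) is (a, -\<Sum>a) + s (1,...,1), a sum of orthogonal vectors\<close>
  have pythagoras: "(\<Sum>k<m. (a k + s)\<^sup>2) + (n * s - (\<Sum>k<m. a k + s))\<^sup>2 = D + n * s\<^sup>2" for s
  proof -
    have "(\<Sum>k<m. (a k + s)\<^sup>2) = (\<Sum>k<m. (a k)\<^sup>2) + 2 * s * (\<Sum>k<m. a k) + real m * s\<^sup>2"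
      by (simp add: power2_sum sum.distrib sum_distrib_left algebra_simps)
    moreover have "(\<Sum>k<m. a k + s) = (\<Sum>k<m. a k) + real m * s" by (simp add: sum.distrib)
    ultimately show ?thesis unfolding D_def n_def by (simp add: power2_eq_square algebra_simps)
  qed
  have integrand: "n * (\<Prod>k<m. \<phi> (a k + s)) * \<phi> (n * s - (\<Sum>k<m. a k + s))
      = (n * c ^ Suc m * sqrt (2 * pi * \<tau>\<^sup>2) * exp (- D / (2 * \<sigma>\<^sup>2))) * normal_density 0 \<tau> s" for s
  proof -
    let ?e = "\<lambda>t. exp (- t / (2 * \<sigma>\<^sup>2))"
    have "(\<Prod>k<m. \<phi> (a k + s)) = c ^ m * ?e (\<Sum>k<m. (a k + s)\<^sup>2)"
      by (simp add: \<phi> prod.distrib exp_sum[symmetric] sum_divide_distrib[symmetric] sum_negf)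
    then have "n * (\<Prod>k<m. \<phi> (a k + s)) * \<phi> (n * s - (\<Sum>k<m. a k + s))
        = n * c ^ Suc m * (?e (\<Sum>k<m. (a k + s)\<^sup>2) * ?e ((n * s - (\<Sum>k<m. a k + s))\<^sup>2))"
      by (simp add: \<phi> mult_ac)
    also have "?e (\<Sum>k<m. (a k + s)\<^sup>2) * ?e ((n * s - (\<Sum>k<m. a k + s))\<^sup>2) = ?e (D + n * s\<^sup>2)"
      unfolding pythagoras[symmetric] by (simp add: exp_add[symmetric] diff_divide_distrib)
    also have "\<dots> = ?e D * ?e (n * s\<^sup>2)"
      by (simp add: exp_add[symmetric] diff_divide_distrib)
    also have "?e (n * s\<^sup>2) = sqrt (2 * pi * \<tau>\<^sup>2) * normal_density 0 \<tau> s"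
      unfolding normal_density_def \<tau>(2) using n \<sigma> by (simp add: field_simps)
    finally show ?thesis
      by (simp add: mult_ac)
  qed
  have "(\<integral>\<^sup>+s. ennreal (n * (\<Prod>k<m. \<phi> (a k + s)) * \<phi> (n * s - (\<Sum>k<m. a k + s))) \<partial>lborel)
      = ennreal (n * c ^ Suc m * sqrt (2 * pi * \<tau>\<^sup>2) * exp (- D / (2 * \<sigma>\<^sup>2)))
        * (\<integral>\<^sup>+s. ennreal (normal_density 0 \<tau> s) \<partial>lborel)"
  proof -
    have "0 \<le> n * c ^ Suc m * sqrt (2 * pi * \<tau>\<^sup>2) * exp (- D / (2 * \<sigma>\<^sup>2))"
      using n by (simp add: c_def)
    then show ?thesis
      unfolding integrand by (simp add: ennreal_mult nn_integral_cmult)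
  qed
  also have "(\<integral>\<^sup>+s. ennreal (normal_density 0 \<tau> s) \<partial>lborel) = 1"
    using \<tau> by (subst nn_integral_eq_integral) auto
  finally show "(\<integral>\<^sup>+s. ennreal (n * (\<Prod>k<m. \<phi> (a k + s)) * \<phi> (n * s - (\<Sum>k<m. a k + s))) \<partial>lborel)
      = ennreal (n * c ^ Suc m * sqrt (2 * pi * \<tau>\<^sup>2) * exp (- ((\<Sum>k<m. (a k)\<^sup>2) + (\<Sum>k<m. a k)\<^sup>2) / (2 * \<sigma>\<^sup>2)))"
    by (simp add: D_def)
qed

lemma distr_gauss_iso_centered_coordinates:
  fixes x :: "nat \<Rightarrow> real"
  assumes \<sigma>: "\<sigma> > 0"
  obtains K where "K > 0" and
    "distr (gauss_iso (Suc m) \<sigma>) (PiM {..<m} (\<lambda>_. lborel))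
        (\<lambda>\<eta>. \<lambda>k\<in>{..<m}. x k + \<eta> k - (\<Sum>l<Suc m. \<eta> l) / Suc m)
     = density (PiM {..<m} (\<lambda>_. lborel))
        (\<lambda>v. ennreal (K * exp (- ((\<Sum>k<m. (v k - x k)\<^sup>2) + (\<Sum>k<m. v k - x k)\<^sup>2) / (2 * \<sigma>\<^sup>2))))"
proof -
  define \<phi> where "\<phi> = normal_density 0 \<sigma>"
  define n where "n = real (Suc m)"
  let ?L = "PiM {..<m} (\<lambda>_. lborel :: real measure)"
  define u where "u \<eta> = (\<lambda>k\<in>{..<m}. x k + \<eta> k - (\<Sum>l<Suc m. \<eta> l) / n)" for \<eta> :: "nat \<Rightarrow> real"
  obtain K where K: "K > 0" and fiber: "\<And>a. (\<integral>\<^sup>+s. ennreal (n * (\<Prod>k<m. \<phi> (a k + s)) * \<phi> (n * s - (\<Sum>k<m. a k + s))) \<partial>lborel)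
      = ennreal (K * exp (- ((\<Sum>k<m. (a k)\<^sup>2) + (\<Sum>k<m. a k)\<^sup>2) / (2 * \<sigma>\<^sup>2)))"
    using nn_integral_normal_density_fiber[OF \<sigma>] unfolding \<phi>_def n_def by blast
  define q where "q v = ennreal (K * exp (- ((\<Sum>k<m. (v k - x k)\<^sup>2) + (\<Sum>k<m. v k - x k)\<^sup>2) / (2 * \<sigma>\<^sup>2)))" for v
  have [measurable]: "\<phi> \<in> borel_measurable borel" unfolding \<phi>_def by simp
  have u_meas: "u \<in> measurable (gauss_iso (Suc m) \<sigma>) ?L"
    unfolding u_def n_def by (rule measurable_gauss_iso_centered)
  have q_meas: "q \<in> borel_measurable ?L" unfolding q_def by measurable
  have integral_u: "(\<integral>\<^sup>+\<eta>. F (u \<eta>) \<partial>gauss_iso (Suc m) \<sigma>) = (\<integral>\<^sup>+v. F v * q v \<partial>?L)"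
    if [measurable]: "F \<in> borel_measurable ?L" for F
  proof -
    have "(\<integral>\<^sup>+\<eta>. F (u \<eta>) \<partial>gauss_iso (Suc m) \<sigma>)
        = (\<integral>\<^sup>+\<eta>. (\<integral>\<^sup>+s. ennreal (n * (\<Prod>i<m. \<phi> (\<eta> i)) * \<phi> (n * s - (\<Sum>l<m. \<eta> l)))
            * F (\<lambda>k\<in>{..<m}. x k + \<eta> k - s) \<partial>lborel) \<partial>?L)"
      unfolding u_def \<phi>_def n_def by (rule nn_integral_gauss_iso_centered[OF \<sigma>]) measurable
    \<comment> \<open>for fixed s, substitute \<eta> = v - x + s\<close>
    also have "\<dots> = (\<integral>\<^sup>+v. (\<integral>\<^sup>+s. ennreal (n * (\<Prod>k<m. \<phi> ((v k - x k) + s)) * \<phi> (n * s - (\<Sum>k<m. (v k - x k) + s)))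
            * F v \<partial>lborel) \<partial>?L)"
      by (subst nn_integral_PiM_lborel_shear[where c = "\<lambda>k. - x k"], simp, measurable)
        (auto intro!: nn_integral_cong arg_cong2[where f = "(*)"] arg_cong[where f = F]
          simp: space_PiM PiE_def extensional_def fun_eq_iff algebra_simps)
    also have "\<dots> = (\<integral>\<^sup>+v. F v * q v \<partial>?L)"
      unfolding q_def fiber[symmetric]
      by (intro nn_integral_cong, subst nn_integral_cmult[symmetric]) (simp_all add: mult.commute)
    finally show ?thesis .
  qed
  have "distr (gauss_iso (Suc m) \<sigma>) ?L u = density ?L q"
  proof (rule measure_eqI)
    fix A assume "A \<in> sets (distr (gauss_iso (Suc m) \<sigma>) ?L u)"
    then have A: "A \<in> sets ?L" by simp
    have "emeasure (distr (gauss_iso (Suc m) \<sigma>) ?L u) A = (\<integral>\<^sup>+v. indicator A v \<partial>distr (gauss_iso (Suc m) \<sigma>) ?L u)"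
      using A by simp
    also have "\<dots> = (\<integral>\<^sup>+\<eta>. indicator A (u \<eta>) \<partial>gauss_iso (Suc m) \<sigma>)"
      using A by (intro nn_integral_distr u_meas) simp
    also have "\<dots> = (\<integral>\<^sup>+v. indicator A v * q v \<partial>?L)"
      using A by (intro integral_u) simp
    also have "\<dots> = emeasure (density ?L q) A"
      using A q_meas by (simp add: emeasure_density mult.commute)
    finally show "emeasure (distr (gauss_iso (Suc m) \<sigma>) ?L u) A = emeasure (density ?L q) A" .
  qed simp
  with K show ?thesis
    using that unfolding u_def n_def q_def by blast
qed

lemma distr_left_inverse_cancel:
  assumes eq: "distr M1 N h = distr M2 N h"
    and h: "h \<in> measurable M N" and r: "r \<in> measurable N M"
    and inverse: "\<And>x. x \<in> space M \<Longrightarrow> r (h x) = x"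
    and sets: "sets M1 = sets M" "sets M2 = sets M"
  shows "M1 = M2"
proof -
  have recover: "distr (distr M' N h) M r = M'" if M': "sets M' = sets M" for M'
  proof -
    have "distr (distr M' N h) M r = distr M' M (r \<circ> h)"
      using h r by (intro distr_distr) (simp_all add: measurable_cong_sets[OF M' refl])
    also have "\<dots> = distr M' M (\<lambda>x. x)"
      using inverse sets_eq_imp_space_eq[OF M'] by (intro distr_cong) auto
    also have "\<dots> = M'"
      using M' by (intro distr_id2) simp
    finally show ?thesis .
  qed
  show ?thesis
    using recover[OF sets(1)] recover[OF sets(2)] eq by metis
qed

lemma density_hyp_measure:
  assumes [measurable]: "f \<in> borel_measurable (PiM {..<Suc m} (\<lambda>_. lborel))"
  shows "density (hyp_measure (Suc m) C) (\<lambda>v. ennreal (f v))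
       = distr (density (PiM {..<m} (\<lambda>_. lborel))
                  (\<lambda>u. ennreal (sqrt (Suc m)) * ennreal (f (hyp_param (Suc m) C u))))
               (PiM {..<Suc m} (\<lambda>_. lborel)) (hyp_param (Suc m) C)"
proof -
  have "density (hyp_measure (Suc m) C) (\<lambda>v. ennreal (f v))
      = distr (density (density (PiM {..<m} (\<lambda>_. lborel)) (\<lambda>_. ennreal (sqrt (Suc m))))
                 (\<lambda>u. ennreal (f (hyp_param (Suc m) C u))))
              (PiM {..<Suc m} (\<lambda>_. lborel)) (hyp_param (Suc m) C)"
    unfolding hyp_measure_def diff_Suc_1 by (intro density_distr) simp_all
  then show ?thesis
    by (subst (asm) density_density_eq) simp_all
qed

lemma AE_density_projection_gaussian:
  fixes x :: "nat \<Rightarrow> real" and f :: "(nat \<Rightarrow> real) \<Rightarrow> real"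
  assumes x: "x \<in> K_S (Suc m) C" and \<sigma>: "\<sigma> > 0"
    and [measurable]: "f \<in> borel_measurable (PiM {..<Suc m} (\<lambda>_. lborel))"
    and f_density: "distr (gauss_iso (Suc m) \<sigma>) (PiM {..<Suc m} (\<lambda>_. lborel))
                       (\<lambda>\<eta>. pi_S (Suc m) C (\<lambda>k\<in>{..<Suc m}. x k + \<eta> k))
                     = density (hyp_measure (Suc m) C) (\<lambda>v. ennreal (f v))"
  obtains K where "K > 0" and
    "AE u in PiM {..<m} (\<lambda>_. lborel).
       K * exp (- ((\<Sum>k<m. (u k - x k)\<^sup>2) + (\<Sum>k<m. u k - x k)\<^sup>2) / (2 * \<sigma>\<^sup>2))
         = sqrt (Suc m) * f (hyp_param (Suc m) C u)"
proof -
  let ?L = "PiM {..<m} (\<lambda>_. lborel :: real measure)"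
  interpret L: finite_product_sigma_finite "\<lambda>_. lborel :: real measure" "{..<m}"
    by standard auto
  let ?h = "hyp_param (Suc m) C"
  let ?u = "\<lambda>\<eta>. \<lambda>k\<in>{..<m}. x k + \<eta> k - (\<Sum>l<Suc m. \<eta> l) / Suc m"
  define q where "q K u = K * exp (- ((\<Sum>k<m. (u k - x k)\<^sup>2) + (\<Sum>k<m. u k - x k)\<^sup>2) / (2 * \<sigma>\<^sup>2))"
    for K u
  obtain K where K: "K > 0"
    and law: "distr (gauss_iso (Suc m) \<sigma>) ?L ?u = density ?L (\<lambda>u. ennreal (q K u))"
    unfolding q_def by (rule distr_gauss_iso_centered_coordinates[OF \<sigma>])
  define g where "g u = ennreal (sqrt (Suc m)) * ennreal (f (?h u))" for u
  have "distr (density ?L (\<lambda>u. ennreal (q K u))) (PiM {..<Suc m} (\<lambda>_. lborel)) ?h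
      = distr (gauss_iso (Suc m) \<sigma>) (PiM {..<Suc m} (\<lambda>_. lborel)) (?h \<circ> ?u)"
    unfolding law[symmetric] using measurable_gauss_iso_centered by (intro distr_distr) simp_all
  also have "\<dots> = density (hyp_measure (Suc m) C) (\<lambda>v. ennreal (f v))"
    unfolding f_density[symmetric] using x by (intro distr_cong) (simp_all add: pi_S_translate)
  also have "\<dots> = distr (density ?L g) (PiM {..<Suc m} (\<lambda>_. lborel)) ?h"
    unfolding g_def by (rule density_hyp_measure) measurable
  finally have densities: "density ?L (\<lambda>u. ennreal (q K u)) = density ?L g"
    by (rule distr_left_inverse_cancel[where r = "\<lambda>v. restrict v {..<m}"])
      (auto simp: restrict_hyp_param space_PiM)
  have "AE u in ?L. ennreal (q K u) = g u"
    by (rule L.density_unique[OF _ _ densities]) (unfold q_def g_def, measurable)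
  then have "AE u in ?L. q K u = sqrt (Suc m) * f (?h u)"
  proof (rule eventually_mono)
    fix u assume "ennreal (q K u) = g u"
    moreover have "q K u > 0" using K by (simp add: q_def)
    ultimately show "q K u = sqrt (Suc m) * f (?h u)"
      unfolding g_def by (metis ennreal_eq_0_iff ennreal_inj ennreal_mult' ennreal_neg less_eq_real_def
          not_less_iff_gr_or_eq real_sqrt_ge_zero of_nat_0_le_iff)
  qed
  with K that show ?thesis
    unfolding q_def by blast
qed

section \<open>Continuous densities\<close>

lemma emeasure_lborel_open_pos:
  assumes "open X" "a \<in> X"
  shows "0 < emeasure lborel (X :: real set)"
proof -
  obtain e where e: "e > 0" "ball a e \<subseteq> X"
    using assms open_contains_ball by blast
  have "0 < emeasure lborel {a - e <..< a + e}"
    using e by simp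
  also have "\<dots> \<le> emeasure lborel X"
    using e assms by (intro emeasure_mono) (auto simp: ball_eq_greaterThanLessThan)
  finally show ?thesis .
qed

lemma PiM_lborel_box_in_open:
  assumes I: "finite I" and A: "open A" "v \<in> A" and v: "v \<in> PiE I (\<lambda>_. UNIV)"
  obtains B where "B \<in> sets (PiM I (\<lambda>_. lborel))" "B \<subseteq> A"
    and "emeasure (PiM I (\<lambda>_. lborel :: real measure)) B > 0"
proof -
  have "openin (product_topology (\<lambda>i. euclidean) UNIV) A"
    using A(1) unfolding open_fun_def .
  from product_topology_open_contains_basis[OF this A(2)]
  obtain X where X: "v \<in> (\<Pi>\<^sub>E i\<in>UNIV. X i)" "\<And>i. openin euclidean (X i)" "(\<Pi>\<^sub>E i\<in>UNIV. X i) \<subseteq> A"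
    by (auto simp del: PiE_UNIV_domain)
  have X_open: "open (X i)" and v_X: "v i \<in> X i" for i
    using X(1,2) by (auto simp: PiE_iff)
  show ?thesis
  proof
    show "PiE I X \<in> sets (PiM I (\<lambda>_. lborel))"
      using X_open I by (intro sets_PiM_I_finite) auto
    \<comment> \<open>outside I, members of the box take the value undefined, which is v's value there\<close>
    have "y i \<in> X i" if "y \<in> PiE I X" for y i
      using that v v_X[of i] by (cases "i \<in> I") (auto simp: PiE_iff extensional_def)
    then show "PiE I X \<subseteq> A"
      using X(3) by (auto simp: PiE_iff)
    have "emeasure (PiM I (\<lambda>_. lborel)) (PiE I X) = (\<Prod>i\<in>I. emeasure lborel (X i))"
      using X_open I by (intro lborel_product.emeasure_PiM) auto
    also have "\<dots> > 0"
      using I emeasure_lborel_open_pos[OF X_open v_X] by (simp add: zero_less_iff_neq_zero prod_zero_iff)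
    finally show "emeasure (PiM I (\<lambda>_. lborel :: real measure)) (PiE I X) > 0" .
  qed
qed

lemma continuous_on_AE_PiM_lborel_eq:
  fixes g1 g2 :: "(nat \<Rightarrow> real) \<Rightarrow> real"
  assumes I: "finite I"
    and cont: "continuous_on (PiE I (\<lambda>_. UNIV)) g1" "continuous_on (PiE I (\<lambda>_. UNIV)) g2"
    and AE: "AE v in PiM I (\<lambda>_. lborel). g1 v = g2 v"
    and v: "v \<in> PiE I (\<lambda>_. UNIV)"
  shows "g1 v = g2 v"
proof (rule ccontr)
  assume "g1 v \<noteq> g2 v"
  moreover have "continuous_on (PiE I (\<lambda>_. UNIV)) (\<lambda>v. g1 v - g2 v)"
    using cont by (intro continuous_intros)
  ultimately obtain A where A: "open A" "v \<in> A"
    and A_ne: "\<And>y. y \<in> PiE I (\<lambda>_. UNIV) \<Longrightarrow> y \<in> A \<Longrightarrow> g1 y - g2 y \<in> - {0}"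
    using v unfolding continuous_on_topological by (metis Compl_iff open_Compl closed_singleton
        right_minus_eq singletonD)
  obtain B where B: "B \<in> sets (PiM I (\<lambda>_. lborel))" "B \<subseteq> A"
    and B_pos: "emeasure (PiM I (\<lambda>_. lborel :: real measure)) B > 0"
    using PiM_lborel_box_in_open[OF I A v] .
  from AE obtain N where N: "{y \<in> space (PiM I (\<lambda>_. lborel)). g1 y \<noteq> g2 y} \<subseteq> N"
    "emeasure (PiM I (\<lambda>_. lborel)) N = 0" "N \<in> sets (PiM I (\<lambda>_. lborel))"
    by (auto elim!: AE_E)
  have "B \<subseteq> N"
    using B A_ne N(1) sets.sets_into_space[OF B(1)] by (fastforce simp: space_PiM)
  then have "emeasure (PiM I (\<lambda>_. lborel)) B = 0"
    using N(2,3) by (metis emeasure_mono le_zero_eq)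
  with B_pos show False by simp
qed

lemma sqdist_restrict_K_S:
  assumes x: "x \<in> K_S (Suc m) C" and y: "y \<in> K_S (Suc m) C"
  shows "(\<Sum>k<m. (y k - x k)\<^sup>2) + (\<Sum>k<m. y k - x k)\<^sup>2 = (\<Sum>k<Suc m. (y k - x k)\<^sup>2)"
proof -
  have "(\<Sum>k<m. y k - x k) = x m - y m"
    using x y by (simp add: K_S_def sum_subtractf)
  then show ?thesis
    by (simp add: power2_commute)
qed

lemma density_projection_gaussian:
  fixes x :: "nat \<Rightarrow> real" and f :: "(nat \<Rightarrow> real) \<Rightarrow> real"
  assumes x: "x \<in> K_S (Suc m) C" and \<sigma>: "\<sigma> > 0"
    and f_meas: "f \<in> borel_measurable (PiM {..<Suc m} (\<lambda>_. lborel))"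
    and f_density: "distr (gauss_iso (Suc m) \<sigma>) (PiM {..<Suc m} (\<lambda>_. lborel))
                       (\<lambda>\<eta>. pi_S (Suc m) C (\<lambda>k\<in>{..<Suc m}. x k + \<eta> k))
                     = density (hyp_measure (Suc m) C) (\<lambda>v. ennreal (f v))"
    and f_cont: "continuous_on (K_S (Suc m) C) f"
  obtains c where "c > 0"
    and "\<And>y. y \<in> K_S (Suc m) C \<Longrightarrow> f y = c * exp (- (\<Sum>k<Suc m. (y k - x k)\<^sup>2) / (2 * \<sigma>\<^sup>2))"
proof -
  let ?h = "hyp_param (Suc m) C"
  obtain K where K: "K > 0" and AE: "AE u in PiM {..<m} (\<lambda>_. lborel).
       K * exp (- ((\<Sum>k<m. (u k - x k)\<^sup>2) + (\<Sum>k<m. u k - x k)\<^sup>2) / (2 * \<sigma>\<^sup>2))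
         = sqrt (Suc m) * f (?h u)"
    using AE_density_projection_gaussian[OF x \<sigma> f_meas f_density] by blast
  define E where "E u = exp (- ((\<Sum>k<m. (u k - x k)\<^sup>2) + (\<Sum>k<m. u k - x k)\<^sup>2) / (2 * \<sigma>\<^sup>2))"
    for u :: "nat \<Rightarrow> real"
  have "continuous_on (PiE {..<m} (\<lambda>_. UNIV)) (\<lambda>u. f (?h u))"
    using hyp_param_in_K_S by (intro continuous_on_compose2[OF f_cont continuous_on_hyp_param]) auto
  moreover have "continuous_on (PiE {..<m} (\<lambda>_. UNIV)) (\<lambda>u. K / sqrt (Suc m) * E u)"
    unfolding E_def using \<sigma> by (intro continuous_intros continuous_on_coordinate) auto
  moreover have "AE u in PiM {..<m} (\<lambda>_. lborel). f (?h u) = K / sqrt (Suc m) * E u"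
    using AE unfolding E_def[symmetric] by eventually_elim (simp add: field_simps)
  ultimately have fE: "f (?h u) = K / sqrt (Suc m) * E u" if "u \<in> PiE {..<m} (\<lambda>_. UNIV)" for u
    by (rule continuous_on_AE_PiM_lborel_eq[OF finite_lessThan _ _ _ that])
  show ?thesis
  proof
    show "K / sqrt (Suc m) > 0"
      using K by simp
    fix y assume y: "y \<in> K_S (Suc m) C"
    have "f y = K / sqrt (Suc m) * E (restrict y {..<m})"
      using fE[of "restrict y {..<m}"] hyp_param_restrict[OF y] by simp
    also have "E (restrict y {..<m}) = exp (- (\<Sum>k<Suc m. (y k - x k)\<^sup>2) / (2 * \<sigma>\<^sup>2))"
      unfolding E_def sqdist_restrict_K_S[OF x y, symmetric] by simp
    finally show "f y = K / sqrt (Suc m) * exp (- (\<Sum>k<Suc m. (y k - x k)\<^sup>2) / (2 * \<sigma>\<^sup>2))" .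
  qed
qed

section \<open>Swapping two entries\<close>

lemma sw_self: "sw i i y = y"
  by (simp add: sw_def fun_eq_iff)

lemma sum_sw:
  fixes F :: "nat \<Rightarrow> real \<Rightarrow> real"
  assumes ij: "i < n" "j < n" "i \<noteq> j"
  shows "(\<Sum>k<n. F k (sw i j y k)) = (\<Sum>k<n. F k (y k)) + (F i (y j) + F j (y i)) - (F i (y i) + F j (y j))"
proof -
  have split: "(\<Sum>k<n. G k) = G i + G j + (\<Sum>k\<in>{..<n} - {i, j}. G k)" for G :: "nat \<Rightarrow> real"
  proof -
    have "(\<Sum>k<n. G k) = G i + (\<Sum>k\<in>{..<n} - {i}. G k)"
      using ij by (intro sum.remove) auto
    also have "(\<Sum>k\<in>{..<n} - {i}. G k) = G j + (\<Sum>k\<in>{..<n} - {i} - {j}. G k)"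
      using ij by (intro sum.remove) auto
    also have "{..<n} - {i} - {j} = {..<n} - {i, j}"
      by auto
    finally show ?thesis
      by (simp only: add.assoc)
  qed
  have "(\<Sum>k\<in>{..<n} - {i, j}. F k (sw i j y k)) = (\<Sum>k\<in>{..<n} - {i, j}. F k (y k))"
    by (intro sum.cong) (auto simp: sw_def)
  moreover have "sw i j y i = y j" "sw i j y j = y i"
    using ij(3) by (simp_all add: sw_def)
  ultimately show ?thesis
    unfolding split[of "\<lambda>k. F k (sw i j y k)"] split[of "\<lambda>k. F k (y k)"] by simp
qed

lemma sw_in_K_S:
  assumes y: "y \<in> K_S n C" and ij: "i < n" "j < n"
  shows "sw i j y \<in> K_S n C"
proof (cases "i = j")
  case True
  then show ?thesis
    using y by (simp add: sw_self)
next
  case False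
  then show ?thesis
    using y ij sum_sw[OF ij False, of "\<lambda>_ t. t"] by (auto simp: K_S_def PiE_def extensional_def sw_def)
qed

lemma sqdist_le_sqdist_sw:
  fixes x y :: "nat \<Rightarrow> real"
  assumes ij: "i < n" "j < n" and xij: "x i \<le> x j" and yij: "y i \<le> y j"
  shows "(\<Sum>k<n. (y k - x k)\<^sup>2) \<le> (\<Sum>k<n. (sw i j y k - x k)\<^sup>2)"
proof (cases "i = j")
  case True
  then show ?thesis by (simp add: sw_self)
next
  case False
  \<comment> \<open>rearrangement inequality for two terms\<close>
  have "0 \<le> (y j - y i) * (x j - x i)"
    using xij yij by simp
  then have "(y i - x i)\<^sup>2 + (y j - x j)\<^sup>2 \<le> (y j - x i)\<^sup>2 + (y i - x j)\<^sup>2"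
    by (simp add: power2_eq_square algebra_simps)
  moreover note sum_sw[OF ij False, of "\<lambda>k t. (t - x k)\<^sup>2" y]
  ultimately show ?thesis
    by linarith
qed

theorem corollary2:
  fixes n :: nat and C \<sigma> :: real and x y :: "nat \<Rightarrow> real"
    and f :: "(nat \<Rightarrow> real) \<Rightarrow> real" and i j :: nat
  assumes n2: "n \<ge> 2" and Cpos: "C > 0" and x_in: "x \<in> K_S n C" and sigma_pos: "\<sigma> > 0"
    and f_meas: "f \<in> borel_measurable (PiM {..<n} (\<lambda>_. lborel))"
    and f_density: "distr (gauss_iso n \<sigma>) (PiM {..<n} (\<lambda>_. lborel))
                       (\<lambda>\<eta>. pi_S n C (\<lambda>k\<in>{..<n}. x k + \<eta> k))
                     = density (hyp_measure n C) (\<lambda>v. ennreal (f v))"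
    and f_cont: "continuous_on (K_S n C) f"
    and ij: "i < n" "j < n"
    and y_in: "y \<in> K_S n C"
    and xij: "x i \<le> x j" and yij: "y i \<le> y j"
  shows "f y \<ge> f (sw i j y)"
proof -
  \<comment> \<open>only n \<ge> 1 is needed, and C > 0 not at all\<close>
  obtain m where n: "n = Suc m"
    using n2 by (cases n) auto
  from x_in f_meas f_density f_cont obtain c where c: "c > 0"
    and f_gauss: "\<And>y. y \<in> K_S n C \<Longrightarrow> f y = c * exp (- (\<Sum>k<n. (y k - x k)\<^sup>2) / (2 * \<sigma>\<^sup>2))"
    unfolding n by (rule density_projection_gaussian[OF _ sigma_pos]) blast
  have "(\<Sum>k<n. (y k - x k)\<^sup>2) \<le> (\<Sum>k<n. (sw i j y k - x k)\<^sup>2)"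
    using ij xij yij by (rule sqdist_le_sqdist_sw)
  then have "- (\<Sum>k<n. (sw i j y k - x k)\<^sup>2) / (2 * \<sigma>\<^sup>2) \<le> - (\<Sum>k<n. (y k - x k)\<^sup>2) / (2 * \<sigma>\<^sup>2)"
    by (intro divide_right_mono) simp_all
  then show ?thesis
    unfolding f_gauss[OF y_in] f_gauss[OF sw_in_K_S[OF y_in ij]] using c by simp
qed

end
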